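(* For every integer $n\ge 0$, \[ p_n(x) = 2^n\sum_{k=0}^n\binom{n+1}{k} F_{n-k}(x,1/2)\,F_k(x,1/2). \]
   Context: Define polynomial sequences $(p_k(x))_{k\ge -1}$ and $(q_k(x))_{k\ge -1}$ by $p_{-1}(x)=0$, $q_{-1}(x)=1$ and, for $k\ge -1$, $p_{k+1}(x) = 2(kx+1)p_k(x) + 2x(1-x)p_k'(x) + q_k(x)$, $q_{k+1}(x) = (2(k+1)x+1)q_k(x) + 2x(1-x)q_k'(x)$. For a permutation $\pi=\pi_1\cdots\pi_n$ of $[n]=\{1,\dots,n\}$, let $\mathrm{exc}(\pi)=|\{i\in[n]:\pi_i>i\}|$ and $\mathrm{cyc}(\pi)$ the number of cycles in its disjoint cycle decomposition. The bivariate Eulerian polynomials are $F_0(x,y)=1$ and $F_n(x,y)=\sum_{\pi\in\mathfrak S_n} x^{\mathrm{exc}(\pi)}y^{\mathrm{cyc}(\pi)}$ for $n>0$, where $\mathfrak S_n$ is the symmetric group on $[n]$; their exponential generating function is $\sum_{n\ge0}F_n(x,y)t^n/n! = \left(\frac{1-x}{e^{t(x-1)}-x}\right)^y$. *)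

theory Defs
  imports "HOL-Computational_Algebra.Polynomial" "HOL-Combinatorics.Combinatorics"
begin

text \<open>pq m = (p_(m-1), q_(m-1)): index shifted by one so that pq 0 = (p_(-1), q_(-1)).
  The step pq (Suc m) uses k = m - 1.\<close>
fun pq :: "nat \<Rightarrow> real poly \<times> real poly" where
  "pq 0 = (0, 1)"
| "pq (Suc m) =
     (let p = fst (pq m); q = snd (pq m); k = real m - 1 in
       (smult 2 [:1, k:] * p + smult 2 [:0, 1, -1:] * pderiv p + q,
        [:1, 2 * (k + 1):] * q + smult 2 [:0, 1, -1:] * pderiv q))"

definition p_poly :: "nat \<Rightarrow> real poly" where
  "p_poly n = fst (pq (Suc n))"

definition q_poly :: "nat \<Rightarrow> real poly" where
  "q_poly n = snd (pq (Suc n))"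

definition exc :: "nat \<Rightarrow> (nat \<Rightarrow> nat) \<Rightarrow> nat" where
  "exc n \<pi> = card {i \<in> {1..n}. \<pi> i > i}"

definition cyc :: "nat \<Rightarrow> (nat \<Rightarrow> nat) \<Rightarrow> nat" where
  "cyc n \<pi> = card ((\<lambda>i. orbit \<pi> i) ` {1..n})"

definition F :: "nat \<Rightarrow> real \<Rightarrow> real \<Rightarrow> real" where
  "F n x y = (if n = 0 then 1 else
     (\<Sum>\<pi> \<in> {\<pi>. \<pi> permutes {1..n}}. x ^ exc n \<pi> * y ^ cyc n \<pi>))"

end

theory Submission
  imports Defs
begin

text \<open>Inserting \<open>n+1\<close> into a permutation of \<open>[n]\<close>, either as a new fixed point or
  right after one of the letters \<open>j\<close>, gives the recurrence
  \<open>F(n+1) = (y + n x) F(n) + x (1 - x) F(n)'\<close> (derivative in \<open>x\<close>). By the Leibniz rule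
  and Pascal's rule, the convolution \<open>G(n) = \<Sum>\<^sub>k C(n+1,k) F(n-k) F(k)\<close> then satisfies
  \<open>G(n+1) = (2y + n x) G(n) + x (1 - x) G(n)' + F(n+1)\<close>. For \<open>y = 1/2\<close> the pair
  \<open>(2\<^sup>n G(n), 2\<^sup>n\<^sup>+\<^sup>1 F(n+1))\<close> therefore obeys the defining recurrence of \<open>(p\<^sub>n, q\<^sub>n)\<close>.\<close>

lemma orbit_fixpoint_notin:
  assumes "permutation \<pi>" "\<pi> a = a" "x \<noteq> a"
  shows "a \<notin> orbit \<pi> x"
proof
  assume "a \<in> orbit \<pi> x"
  with assms have "x \<in> orbit \<pi> a" by (metis orbit_swap permutation_self_in_orbit)
  moreover have "orbit \<pi> a = {a}" using assms(2) by (simp add: orbit_eq_singleton_iff)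
  ultimately show False using assms(3) by simp
qed

lemma card_orbits_insert_fixpoint:
  assumes "\<pi> permutes S" "finite S" "a \<notin> S"
  shows "card (orbit \<pi> ` insert a S) = Suc (card (orbit \<pi> ` S))"
proof -
  have "\<pi> a = a" using assms by (simp add: permutes_not_in)
  moreover have "permutation \<pi>" using assms permutation_permutes by blast
  ultimately have "orbit \<pi> a \<notin> orbit \<pi> ` S"
    using orbit_fixpoint_notin assms(3) orbit.base[of \<pi> a] by fastforce
  then show ?thesis using assms(2) by simp
qed

text \<open>Inserting a new letter \<open>a\<close> right before \<open>m\<close> in the cycle of \<open>m\<close>.\<close>

locale permutation_insertion =
  fixes \<pi> :: "'a \<Rightarrow> 'a" and S a m
  assumes permutes_S: "\<pi> permutes S" and finite_S: "finite S"
    and a_notin: "a \<notin> S" and m_in: "m \<in> S"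
begin

abbreviation \<sigma> :: "'a \<Rightarrow> 'a" where "\<sigma> \<equiv> transpose a m \<circ> \<pi>"

lemma fixes_a: "\<pi> a = a"
  using permutes_S a_notin by (simp add: permutes_not_in)

lemma permutation_\<pi>: "permutation \<pi>"
  using permutes_S finite_S permutation_permutes by blast

lemma \<sigma>_permutes: "\<sigma> permutes insert a S"
  by (rule permutes_compose[OF permutes_subset[OF permutes_S] permutes_swap_id]) (use m_in in auto)

lemma \<sigma>_a: "\<sigma> a = m"
  using fixes_a by simp

lemma \<sigma>_step:
  assumes "z \<noteq> a"
  shows "(\<pi> z = m \<and> \<sigma> z = a) \<or> (\<pi> z \<noteq> m \<and> \<sigma> z = \<pi> z)"
proof -
  have "\<pi> z \<noteq> a" using assms fixes_a permutes_S by (metis permutes_inv_eq)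
  then show ?thesis by (auto simp: transpose_def)
qed

lemma orbit_subset_orbit_\<sigma>:
  assumes "x \<noteq> a" "y \<in> orbit \<pi> x"
  shows "y \<in> orbit \<sigma> x"
  using assms(2)
proof induction
  case base
  then show ?case using \<sigma>_step[OF assms(1)] \<sigma>_a by (metis orbit.base orbit.step)
next
  case (step y)
  have "y \<noteq> a" using step.hyps orbit_fixpoint_notin[OF permutation_\<pi> fixes_a assms(1)] by auto
  then show ?case using \<sigma>_step[of y] \<sigma>_a step.IH by (metis orbit.step)
qed

lemma orbit_\<sigma>_subset:
  assumes "x \<noteq> a" "y \<in> orbit \<sigma> x"
  shows "y \<in> orbit \<pi> x \<or> (y = a \<and> m \<in> orbit \<pi> x)"
  using assms(2)
proof induction
  case base
  then show ?case using \<sigma>_step[OF assms(1)] by (metis orbit.base)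
next
  case (step y)
  show ?case
  proof (cases "y = a")
    case True
    then show ?thesis
      using step.IH \<sigma>_a orbit_fixpoint_notin[OF permutation_\<pi> fixes_a assms(1)] by auto
  next
    case False
    then have "y \<in> orbit \<pi> x" using step.IH by auto
    then show ?thesis using \<sigma>_step[OF False] by (metis orbit.step)
  qed
qed

lemma orbit_\<sigma>_eq:
  assumes "x \<noteq> a"
  shows "orbit \<sigma> x - {a} = orbit \<pi> x"
  using orbit_subset_orbit_\<sigma>[OF assms] orbit_\<sigma>_subset[OF assms]
    orbit_fixpoint_notin[OF permutation_\<pi> fixes_a assms] by blast

lemma card_orbits_\<sigma>: "card (orbit \<sigma> ` insert a S) = card (orbit \<pi> ` S)"
proof -
  have perm_\<sigma>: "permutation \<sigma>"
    using \<sigma>_permutes finite_S permutation_permutes by blast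
  have "orbit \<sigma> a = orbit \<sigma> m"
    using permutation_orbit_step[OF perm_\<sigma>, of a] \<sigma>_a by simp
  then have absorb: "orbit \<sigma> ` insert a S = orbit \<sigma> ` S"
    using m_in by auto
  have inj: "inj_on (\<lambda>U. U - {a}) (orbit \<sigma> ` S)"
  proof (rule inj_onI, clarsimp)
    fix i1 i2 assume i: "i1 \<in> S" "i2 \<in> S" and e: "orbit \<sigma> i1 - {a} = orbit \<sigma> i2 - {a}"
    have "i1 \<in> orbit \<sigma> i2"
      using permutation_self_in_orbit[OF perm_\<sigma>, of i1] e i a_notin by blast
    then show "orbit \<sigma> i1 = orbit \<sigma> i2"
      by (meson perm_\<sigma> cyclic_on_orbit' orbit_cyclic_eq3)
  qed
  have "(\<lambda>U. U - {a}) ` orbit \<sigma> ` S = orbit \<pi> ` S"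
    unfolding image_image by (rule image_cong[OF refl]) (metis orbit_\<sigma>_eq a_notin)
  then show ?thesis
    using absorb card_image[OF inj] by simp
qed

end

lemma cyc_insert_fixpoint:
  assumes "\<pi> permutes {1..n}"
  shows "cyc (Suc n) \<pi> = Suc (cyc n \<pi>)"
proof -
  have "{1..Suc n} = insert (Suc n) {1..n}" by auto
  then show ?thesis unfolding cyc_def using card_orbits_insert_fixpoint[OF assms] by simp
qed

lemma cyc_insert_transpose:
  assumes "\<pi> permutes {1..n}" "m \<in> {1..n}"
  shows "cyc (Suc n) (transpose (Suc n) m \<circ> \<pi>) = cyc n \<pi>"
proof -
  interpret permutation_insertion \<pi> "{1..n}" "Suc n" m
    using assms by unfold_locales auto
  have "{1..Suc n} = insert (Suc n) {1..n}" by auto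
  then show ?thesis unfolding cyc_def using card_orbits_\<sigma> by simp
qed

lemma exc_le: "exc n \<pi> \<le> n"
  unfolding exc_def
  by (metis (no_types, lifting) card_atLeastAtMost card_mono diff_Suc_1
      finite_atLeastAtMost mem_Collect_eq subsetI)

lemma exc_insert_fixpoint:
  assumes "\<pi> permutes {1..n}"
  shows "exc (Suc n) \<pi> = exc n \<pi>"
proof -
  have "\<pi> (Suc n) = Suc n" using assms by (simp add: permutes_not_in)
  then have "{i \<in> {1..Suc n}. \<pi> i > i} = {i \<in> {1..n}. \<pi> i > i}"
    by (auto simp: le_Suc_eq)
  then show ?thesis by (simp add: exc_def)
qed

text \<open>Inserting \<open>n+1\<close> right after \<open>j\<close> turns \<open>j\<close> into an excedance and
  \<open>n+1\<close> into a non-excedance, so only a previous non-excedance at \<open>j\<close> changes the count.\<close>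

lemma exc_insert_transpose:
  assumes p: "\<pi> permutes {1..n}" and j: "j \<in> {1..n}"
  shows "exc (Suc n) (transpose (Suc n) (\<pi> j) \<circ> \<pi>) = exc n \<pi> + (if j < \<pi> j then 0 else 1)"
proof -
  define \<sigma> where "\<sigma> = transpose (Suc n) (\<pi> j) \<circ> \<pi>"
  define A where "A = {i \<in> {1..n}. \<pi> i > i}"
  have pj: "\<pi> j \<in> {1..n}" using permutes_in_image[OF p] j by blast
  have pn: "\<pi> (Suc n) = Suc n" using p by (simp add: permutes_not_in)
  have sj: "\<sigma> j = Suc n" unfolding \<sigma>_def by simp
  have sn: "\<sigma> (Suc n) = \<pi> j" unfolding \<sigma>_def using pn by simp
  have si: "\<sigma> i = \<pi> i" if "i \<in> {1..n}" "i \<noteq> j" for i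
  proof -
    have "\<pi> i \<in> {1..n}" using permutes_in_image[OF p] that by blast
    moreover have "\<pi> i \<noteq> \<pi> j" using p that j by (metis permutes_inv_eq)
    ultimately show ?thesis unfolding \<sigma>_def by (auto simp: transpose_def)
  qed
  have eq: "{i \<in> {1..Suc n}. \<sigma> i > i} = (if j < \<pi> j then A else insert j A)"
  proof (intro set_eqI iffI)
    fix i assume "i \<in> {i \<in> {1..Suc n}. \<sigma> i > i}"
    then show "i \<in> (if j < \<pi> j then A else insert j A)"
      using sj sn si pj j unfolding A_def
      by (cases "i = Suc n"; cases "i = j") (auto simp: le_Suc_eq)
  next
    fix i assume "i \<in> (if j < \<pi> j then A else insert j A)"
    then show "i \<in> {i \<in> {1..Suc n}. \<sigma> i > i}"
      using sj sn si pj j unfolding A_def by (cases "i = j") (auto split: if_splits)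
  qed
  have "finite A" unfolding A_def by simp
  moreover have "\<not> j < \<pi> j \<Longrightarrow> j \<notin> A" unfolding A_def by auto
  ultimately show ?thesis unfolding exc_def \<sigma>_def[symmetric] eq A_def[symmetric] by auto
qed

definition xD :: "'a::idom poly \<Rightarrow> 'a poly" where
  "xD p = [:0, 1, -1:] * pderiv p"

lemma xD_mult: "xD (p * q) = p * xD q + q * xD p"
  unfolding xD_def by (simp add: pderiv_mult distrib_left mult.left_commute)

lemma xD_sum: "xD (sum f A) = (\<Sum>x\<in>A. xD (f x))"
  unfolding xD_def by (induct A rule: infinite_finite_induct) (auto simp: pderiv_add distrib_left)

lemma xD_of_nat_mult: "xD (of_nat c * p) = of_nat c * xD p"
proof -
  have "xD (of_nat c :: 'a::idom poly) = 0" by (simp add: xD_def)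
  then show ?thesis unfolding xD_mult by simp
qed

lemma xD_monom: "xD (monom c e) = of_nat e * (monom c e - monom c (Suc e))"
proof (cases e)
  case (Suc k)
  have "[:0, 1, -1:] * monom d k = monom d (Suc k) - monom d (Suc (Suc k))" for d :: 'a
    by (simp add: monom_Suc diff_pCons)
  then show ?thesis
    by (simp add: Suc xD_def pderiv_monom of_nat_poly flip: smult_monom)
qed (simp add: xD_def pderiv_monom)

lemma monom_insertion_identity:
  fixes c y :: "'a::idom"
  assumes "e \<le> n"
  shows "monom (y * c) e + of_nat e * monom c e + of_nat (n - e) * monom c (Suc e)
       = [:y, of_nat n:] * monom c e + xD (monom c e)"
proof -
  have "[:y, of_nat n:] * monom c e = monom (y * c) e + monom (of_nat n * c) (Suc e)"
    by (simp add: monom_Suc smult_monom algebra_simps)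
  then show ?thesis
    using assms by (simp add: xD_monom of_nat_poly of_nat_diff algebra_simps smult_monom
        flip: smult_diff_left) (simp add: add_monom)
qed

definition perm_monom :: "real \<Rightarrow> nat \<Rightarrow> (nat \<Rightarrow> nat) \<Rightarrow> real poly" where
  "perm_monom y n \<pi> = monom (y ^ cyc n \<pi>) (exc n \<pi>)"

definition eulerian_poly :: "real \<Rightarrow> nat \<Rightarrow> real poly" where
  "eulerian_poly y n = (\<Sum>\<pi> \<in> {\<pi>. \<pi> permutes {1..n}}. perm_monom y n \<pi>)"

lemma eulerian_poly_0: "eulerian_poly y 0 = 1"
  by (simp add: eulerian_poly_def perm_monom_def exc_def cyc_def)

lemma poly_eulerian_poly: "poly (eulerian_poly y n) x = F n x y"
  by (cases "n = 0")
    (auto simp: F_def eulerian_poly_def perm_monom_def eulerian_poly_0 poly_sum poly_monom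
      mult.commute exc_def cyc_def)

lemma perm_monom_extensions:
  assumes \<pi>: "\<pi> permutes {1..n}"
  shows "perm_monom y (Suc n) \<pi> + (\<Sum>b\<in>{1..n}. perm_monom y (Suc n) (transpose (Suc n) b \<circ> \<pi>))
       = [:y, of_nat n:] * perm_monom y n \<pi> + xD (perm_monom y n \<pi>)"
proof -
  define c where "c = y ^ cyc n \<pi>"
  define e where "e = exc n \<pi>"
  define A where "A = {j \<in> {1..n}. j < \<pi> j}"
  have "(\<Sum>b\<in>{1..n}. perm_monom y (Suc n) (transpose (Suc n) b \<circ> \<pi>))
      = (\<Sum>j\<in>{1..n}. perm_monom y (Suc n) (transpose (Suc n) (\<pi> j) \<circ> \<pi>))"
    using permutes_imp_bij[OF \<pi>] by (rule sum.reindex_bij_betw[symmetric])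
  also have "\<dots> = (\<Sum>j\<in>{1..n}. if j < \<pi> j then monom c e else monom c (Suc e))"
  proof (rule sum.cong[OF refl])
    fix j assume j: "j \<in> {1..n}"
    then have "\<pi> j \<in> {1..n}" using permutes_in_image[OF \<pi>] by blast
    then show "perm_monom y (Suc n) (transpose (Suc n) (\<pi> j) \<circ> \<pi>)
        = (if j < \<pi> j then monom c e else monom c (Suc e))"
      unfolding perm_monom_def c_def e_def
      using cyc_insert_transpose[OF \<pi>] exc_insert_transpose[OF \<pi> j] by simp
  qed
  also have "\<dots> = of_nat (card A) * monom c e + of_nat (card ({1..n} - A)) * monom c (Suc e)"
  proof -
    have "{1..n} \<inter> {j. j < \<pi> j} = A" "{1..n} \<inter> - {j. j < \<pi> j} = {1..n} - A"
      unfolding A_def by auto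
    then show ?thesis by (simp only: sum.If_cases[OF finite_atLeastAtMost] sum_constant)
  qed
  also have "card A = e"
    unfolding A_def e_def exc_def by (metis (no_types, lifting))
  also have "card ({1..n} - A) = n - e"
    using \<open>card A = e\<close> by (subst card_Diff_subset) (auto simp: A_def)
  finally have insertions: "(\<Sum>b\<in>{1..n}. perm_monom y (Suc n) (transpose (Suc n) b \<circ> \<pi>))
      = of_nat e * monom c e + of_nat (n - e) * monom c (Suc e)" .
  have fixpoint: "perm_monom y (Suc n) \<pi> = monom (y * c) e"
    unfolding perm_monom_def c_def e_def
    using cyc_insert_fixpoint[OF \<pi>] exc_insert_fixpoint[OF \<pi>] by simp
  have unchanged: "perm_monom y n \<pi> = monom c e"
    unfolding perm_monom_def c_def e_def ..
  show ?thesis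
    unfolding unchanged fixpoint insertions add.assoc[symmetric]
    by (rule monom_insertion_identity) (simp add: e_def exc_le)
qed

lemma eulerian_poly_Suc:
  "eulerian_poly y (Suc n) = [:y, of_nat n:] * eulerian_poly y n + xD (eulerian_poly y n)"
proof -
  define P where "P = {\<pi>. \<pi> permutes {1..n}}"
  have "{1..Suc n} = insert (Suc n) {1..n}" by auto
  then have "eulerian_poly y (Suc n)
      = (\<Sum>b\<in>insert (Suc n) {1..n}. \<Sum>\<pi>\<in>P. perm_monom y (Suc n) (transpose (Suc n) b \<circ> \<pi>))"
    unfolding eulerian_poly_def P_def by (simp add: sum_over_permutations_insert)
  also have "\<dots> = (\<Sum>\<pi>\<in>P. perm_monom y (Suc n) \<pi>
      + (\<Sum>b\<in>{1..n}. perm_monom y (Suc n) (transpose (Suc n) b \<circ> \<pi>)))"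
    by (simp add: sum.distrib sum.swap[of _ P])
  also have "\<dots> = (\<Sum>\<pi>\<in>P. [:y, of_nat n:] * perm_monom y n \<pi> + xD (perm_monom y n \<pi>))"
    by (intro sum.cong refl perm_monom_extensions) (simp add: P_def)
  finally show ?thesis
    unfolding eulerian_poly_def P_def by (simp only: sum.distrib sum_distrib_left xD_sum)
qed

lemma binomial_convolution_Suc:
  fixes f g :: "nat \<Rightarrow> 'a::comm_ring_1"
  shows "(\<Sum>k\<le>Suc n. of_nat (Suc (Suc n) choose k) * (f (Suc n - k) * g k))
    = (\<Sum>k\<le>n. of_nat (Suc n choose k) * (f (Suc n - k) * g k + f (n - k) * g (Suc k)))
      + f 0 * g (Suc n)"
proof -
  have pascal: "(\<Sum>k\<le>n. of_nat (Suc (Suc n) choose Suc k) * (f (n - k) * g (Suc k)))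
      = (\<Sum>k\<le>n. of_nat (Suc n choose k) * (f (n - k) * g (Suc k)))
        + (\<Sum>k\<le>n. of_nat (Suc n choose Suc k) * (f (n - k) * g (Suc k)))"
    by (simp add: sum.distrib algebra_simps)
  have shift: "(\<Sum>k\<le>Suc n. of_nat (Suc n choose k) * (f (Suc n - k) * g k))
      = f (Suc n) * g 0 + (\<Sum>k\<le>n. of_nat (Suc n choose Suc k) * (f (n - k) * g (Suc k)))"
    by (subst sum.atMost_Suc_shift) simp
  have "(\<Sum>k\<le>Suc n. of_nat (Suc (Suc n) choose k) * (f (Suc n - k) * g k))
      = (\<Sum>k\<le>n. of_nat (Suc (Suc n) choose Suc k) * (f (n - k) * g (Suc k))) + f (Suc n) * g 0"
    by (subst sum.atMost_Suc_shift) simp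
  also have "\<dots> = (\<Sum>k\<le>n. of_nat (Suc n choose k) * (f (n - k) * g (Suc k)))
      + (\<Sum>k\<le>Suc n. of_nat (Suc n choose k) * (f (Suc n - k) * g k))"
    unfolding pascal shift by simp
  finally show ?thesis
    by (simp add: sum.distrib algebra_simps)
qed

definition eulerian_conv :: "real \<Rightarrow> nat \<Rightarrow> real poly" where
  "eulerian_conv y n =
     (\<Sum>k\<le>n. of_nat (Suc n choose k) * (eulerian_poly y (n - k) * eulerian_poly y k))"

lemma xD_eulerian_poly:
  "xD (eulerian_poly y n) = eulerian_poly y (Suc n) - [:y, of_nat n:] * eulerian_poly y n"
  by (simp add: eulerian_poly_Suc)

lemma eulerian_conv_Suc:
  "eulerian_conv y (Suc n)
     = [:2 * y, of_nat n:] * eulerian_conv y n + xD (eulerian_conv y n) + eulerian_poly y (Suc n)"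
proof -
  let ?E = "eulerian_poly y"
  have summand: "[:2 * y, of_nat n:] * (?E (n - k) * ?E k) + xD (?E (n - k) * ?E k)
      = ?E (Suc n - k) * ?E k + ?E (n - k) * ?E (Suc k)" if "k \<le> n" for k
  proof -
    have ring: "(L1 + L2) * (A * B) + (A * (Y - L2 * B) + B * (X - L1 * A)) = X * B + A * Y"
      for L1 L2 A B X Y :: "real poly"
      by algebra
    have "[:2 * y, of_nat n:] = [:y, of_nat (n - k):] + [:y, of_nat k:]"
      using that by (simp add: of_nat_diff)
    then show ?thesis
      unfolding xD_mult xD_eulerian_poly Suc_diff_le[OF that] by (simp only: ring)
  qed
  have "[:2 * y, of_nat n:] * eulerian_conv y n + xD (eulerian_conv y n)
      = (\<Sum>k\<le>n. of_nat (Suc n choose k)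
          * ([:2 * y, of_nat n:] * (?E (n - k) * ?E k) + xD (?E (n - k) * ?E k)))"
    unfolding eulerian_conv_def xD_sum xD_of_nat_mult sum_distrib_left sum.distrib[symmetric]
    by (simp only: distrib_left mult.left_commute)
  also have "\<dots> = (\<Sum>k\<le>n. of_nat (Suc n choose k)
      * (?E (Suc n - k) * ?E k + ?E (n - k) * ?E (Suc k)))"
    by (rule sum.cong[OF refl]) (simp only: summand atMost_iff)
  finally show ?thesis
    unfolding eulerian_conv_def binomial_convolution_Suc[of n ?E ?E]
    by (simp add: eulerian_poly_0)
qed

lemma pq_eulerian:
  "pq (Suc n) = (smult (2 ^ n) (eulerian_conv (1/2) n),
                 smult (2 ^ Suc n) (eulerian_poly (1/2) (Suc n)))"
proof (induction n)
  case 0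
  have "eulerian_poly (1/2) 1 = [:1/2:]"
    using eulerian_poly_Suc[of "1/2" 0] by (simp add: eulerian_poly_0 xD_def)
  then show ?case
    by (simp add: eulerian_conv_def eulerian_poly_0 one_pCons Let_def)
next
  case (Suc n)
  show ?case
    unfolding pq.simps(2)[of "Suc n"] Suc.IH Let_def fst_conv snd_conv
      eulerian_conv_Suc eulerian_poly_Suc[of _ "Suc n"]
    by (intro prod_eqI poly_eq_poly_eq_iff[THEN iffD1] ext)
      (simp_all add: xD_def pderiv_smult algebra_simps del: pq.simps)
qed

theorem theorem3p7:
  fixes n :: nat and x :: real
  shows "poly (p_poly n) x =
    2 ^ n * (\<Sum>k = 0..n. real (Suc n choose k) * F (n - k) x (1/2) * F k x (1/2))"
  unfolding p_poly_def pq_eulerian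
  by (simp add: eulerian_conv_def poly_sum poly_eulerian_poly atLeast0AtMost mult.assoc)

end
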